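(* Let $(\mathcal{T},[1],\Delta)$ be a triangulated category, let $\mathcal{N}$ be a triangulated subcategory of $\mathcal{T}$, and let $(\mathcal{U},\mathcal{X},\mathcal{V})$ be an $\mathcal{N}$-localization triple in $\mathcal{T}$. (i) If $\mathcal{U}\cap\mathcal{V}$ is a Frobenius special $\mathcal{X}$-monic closed subcategory of $\mathcal{T}$, then $(\mathcal{U},\mathcal{X},\mathcal{V})$ satisfies the Verdier condition. (ii) If $\mathcal{U}\cap\mathcal{V}$ is a Frobenius special $\mathcal{X}$-epic closed subcategory of $\mathcal{T}$, then $(\mathcal{U},\mathcal{X},\mathcal{V})$ satisfies the Verdier condition.
   Context: $\Delta$ denotes the class of distinguished triangles of $\mathcal{T}$. All subcategories are full, additive and closed under isomorphisms. For additive subcategories $\mathcal{X}\subseteq\mathcal{C}$ of $\mathcal{T}$, the factor category $\mathcal{C}/[\mathcal{X}]$ has the objects of $\mathcal{C}$ and $\mathrm{Hom}_{\mathcal{C}/[\mathcal{X}]}(A,B)=\mathrm{Hom}_{\mathcal{T}}(A,B)/\mathcal{X}(A,B)$, where $\mathcal{X}(A,B)$ consists of the morphisms factoring through an object of $\mathcal{X}$; $\underline{f}$ denotes the class of $f$. For a subcategory $\mathcal{Y}$, a morphism $f\colon A\to B$ is $\mathcal{Y}$-monic if $\mathrm{Hom}_{\mathcal{T}}(B,Y)\to\mathrm{Hom}_{\mathcal{T}}(A,Y)$, $g\mapsto gf$, is surjective for all $Y\in\mathcal{Y}$, and $\mathcal{Y}$-epic dually; a $\mathcal{Y}$-preenvelope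 of $A$ is a $\mathcal{Y}$-monic $A\to Y$ with $Y\in\mathcal{Y}$, and a $\mathcal{Y}$-precover of $A$ is a $\mathcal{Y}$-epic $Y\to A$ with $Y\in\mathcal{Y}$. Special $\mathcal{X}$-monic closed: an additive subcategory $\mathcal{C}\supseteq\mathcal{X}$ such that (a) for every $A\in\mathcal{C}$ there is a triangle $A\xrightarrow{i}X\to U\to A[1]$ in $\Delta$ with $U\in\mathcal{C}$ and $i$ an $\mathcal{X}$-preenvelope; (b) whenever $A\xrightarrow{i}X\to U\to A[1]$ is in $\Delta$ with $A,U\in\mathcal{C}$ and $i$ an $\mathcal{X}$-preenvelope, then for every morphism $f\colon A\to B$ in $\mathcal{C}$ there is a triangle $A\xrightarrow{\binom{i}{f}}X\oplus B\to N\to A[1]$ in $\Delta$ with $N\in\mathcal{C}$. Special $\mathcal{X}$-epic closed is the dual notion: $\mathcal{X}\subseteq\mathcal{C}$, every $A\in\mathcal{C}$ admits a triangle $U\to X\xrightarrow{\pi}A\to U[1]$ in $\Delta$ with $U\in\mathcal{C}$ and $\pi$ an $\mathcal{X}$-precover, and for any such triangle and any morphism $f\colon B\to A$ in $\mathcal{C}$ there is a triangle $N\to X\oplus B\xrightarrow{(\pi\ f)}A\to N[1]$ in $\Delta$ with $N\in\mathcal{C}$. A special $\mathcal{X}$-monic closed $\mathcal{C}$ is Frobenius if (a) for each $A\in\mathcal{C}$ there is a triangle $K\xrightarrow{u}X\xrightarrow{v}A\to K[1]$ in $\Delta$ with $K\in\mathcal{C}$ and $u$ an $\mathcal{X}$-preenvelope,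 and (b) for each $A\in\mathcal{C}$ the triangle $A\xrightarrow{i^A}X^A\xrightarrow{p^A}U^A\to A[1]$ of (a) in the definition of special $\mathcal{X}$-monic closed (chosen and fixed for each $A$) has $p^A$ an $\mathcal{X}$-precover. Dually, a special $\mathcal{X}$-epic closed $\mathcal{C}$ is Frobenius if for each $A\in\mathcal{C}$ there is a triangle $A\xrightarrow{}X\xrightarrow{v}K\to A[1]$ in $\Delta$ with $K\in\mathcal{C}$ and $v$ an $\mathcal{X}$-precover, and the fixed triangles $U_A\xrightarrow{\iota_A}X_A\xrightarrow{\pi_A}A\to U_A[1]$ ($\pi_A$ an $\mathcal{X}$-precover, $U_A\in\mathcal{C}$) have $\iota_A$ an $\mathcal{X}$-preenvelope. For additive subcategories $\mathcal{U},\mathcal{V}\supseteq\mathcal{X}$ of an additive subcategory $\mathcal{A}$, put $\mathcal{U}^{\perp_{\mathcal{A}/[\mathcal{X}]}}=\{W\in\mathcal{A}:\mathrm{Hom}_{\mathcal{A}/[\mathcal{X}]}(\mathcal{U},W)=0\}$ and ${}^{\perp_{\mathcal{A}/[\mathcal{X}]}}\mathcal{V}=\{W\in\mathcal{A}:\mathrm{Hom}_{\mathcal{A}/[\mathcal{X}]}(W,\mathcal{V})=0\}$. A triple $(\mathcal{U},\mathcal{X},\mathcal{V})$ with $\mathcal{X}\subseteq\mathcal{U}\cap\mathcal{V}$ and $\mathcal{U},\mathcal{V}\subseteq\mathcal{A}$ is a localization triple of $\mathcal{A}$ if: (a) each $A\in\mathcal{A}$ admits a triangle $A[-1]\to W_A\to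 Q(A)\xrightarrow{r_A}A$ in $\Delta$ with $r_A$ a $\mathcal{U}$-precover and $W_A\in\mathcal{U}^{\perp_{\mathcal{A}/[\mathcal{X}]}}$; (b) each $A\in\mathcal{A}$ admits a triangle $A\xrightarrow{j^A}R(A)\to W^A\to A[1]$ in $\Delta$ with $j^A$ a $\mathcal{V}$-preenvelope and $W^A\in{}^{\perp_{\mathcal{A}/[\mathcal{X}]}}\mathcal{V}$; (c) if $A\in\mathcal{V}$ then $Q(A)\in\mathcal{U}\cap\mathcal{V}$ and $W_A\in(\mathcal{U}\cap\mathcal{V})^{\perp_{\mathcal{V}/[\mathcal{X}]}}$, and if $A\in\mathcal{U}$ then $R(A)\in\mathcal{U}\cap\mathcal{V}$ and $W^A\in{}^{\perp_{\mathcal{U}/[\mathcal{X}]}}(\mathcal{U}\cap\mathcal{V})$. A localization triple $(\mathcal{U},\mathcal{X},\mathcal{V})$ of $\mathcal{T}$ is an $\mathcal{N}$-localization triple if $\mathcal{X}=\mathcal{U}\cap\mathcal{V}\cap\mathcal{N}$ and $\mathcal{U}^{\perp_{\mathcal{T}/[\mathcal{X}]}}\subseteq\mathcal{N}$, ${}^{\perp_{\mathcal{T}/[\mathcal{X}]}}\mathcal{V}\subseteq\mathcal{N}$. It satisfies the Verdier condition if for every triangle $A\xrightarrow{s}B\to N\to A[1]$ in $\Delta$ with $A,B\in\mathcal{U}\cap\mathcal{V}$ and $N\in\mathcal{N}$, the class $\underline{s}$ is an isomorphism in $(\mathcal{U}\cap\mathcal{V})/[\mathcal{X}]$. *)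

theory Defs
  imports Main
begin

text \<open>A (locally small) category whose objects are all elements of the type 'o,
  with arrows in the carrier set Arr, domain/codomain maps, composition
  (Cmp g f = g after f), identities, additive structure on hom-sets,
  a shift functor [1] (Sh on objects, ShM on arrows), and a class Tri of
  distinguished triangles, each recorded as a triple (u,v,w) with
  u : X -> Y, v : Y -> Z, w : Z -> X[1].\<close>

record ('o,'m) tcat =
  Arr :: "'m set"
  Dom :: "'m \<Rightarrow> 'o"
  Cod :: "'m \<Rightarrow> 'o"
  Cmp :: "'m \<Rightarrow> 'm \<Rightarrow> 'm"
  Idm :: "'o \<Rightarrow> 'm"
  Addm :: "'m \<Rightarrow> 'm \<Rightarrow> 'm"
  Zerom :: "'o \<Rightarrow> 'o \<Rightarrow> 'm"
  Negm :: "'m \<Rightarrow> 'm"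
  Sh :: "'o \<Rightarrow> 'o"
  ShM :: "'m \<Rightarrow> 'm"
  Tri :: "('m \<times> 'm \<times> 'm) set"

definition Hom :: "('o,'m) tcat \<Rightarrow> 'o \<Rightarrow> 'o \<Rightarrow> 'm set" where
  "Hom T A B = {f \<in> Arr T. Dom T f = A \<and> Cod T f = B}"

definition category :: "('o,'m) tcat \<Rightarrow> bool" where
  "category T \<longleftrightarrow>
     (\<forall>A. Idm T A \<in> Hom T A A) \<and>
     (\<forall>A B C f g. f \<in> Hom T A B \<longrightarrow> g \<in> Hom T B C \<longrightarrow> Cmp T g f \<in> Hom T A C) \<and>
     (\<forall>A B C D f g h. f \<in> Hom T A B \<longrightarrow> g \<in> Hom T B C \<longrightarrow> h \<in> Hom T C D \<longrightarrow>
         Cmp T h (Cmp T g f) = Cmp T (Cmp T h g) f) \<and>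
     (\<forall>A B f. f \<in> Hom T A B \<longrightarrow> Cmp T f (Idm T A) = f \<and> Cmp T (Idm T B) f = f)"

definition preadditive :: "('o,'m) tcat \<Rightarrow> bool" where
  "preadditive T \<longleftrightarrow> category T \<and>
     (\<forall>A B. Zerom T A B \<in> Hom T A B \<and>
        (\<forall>f\<in>Hom T A B. \<forall>g\<in>Hom T A B. Addm T f g \<in> Hom T A B) \<and>
        (\<forall>f\<in>Hom T A B. Negm T f \<in> Hom T A B) \<and>
        (\<forall>f\<in>Hom T A B. \<forall>g\<in>Hom T A B. \<forall>h\<in>Hom T A B.
            Addm T (Addm T f g) h = Addm T f (Addm T g h)) \<and>
        (\<forall>f\<in>Hom T A B. \<forall>g\<in>Hom T A B. Addm T f g = Addm T g f) \<and>
        (\<forall>f\<in>Hom T A B. Addm T f (Zerom T A B) = f) \<and>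
        (\<forall>f\<in>Hom T A B. Addm T f (Negm T f) = Zerom T A B)) \<and>
     (\<forall>A B C f g h. f \<in> Hom T A B \<longrightarrow> g \<in> Hom T A B \<longrightarrow> h \<in> Hom T B C \<longrightarrow>
         Cmp T h (Addm T f g) = Addm T (Cmp T h f) (Cmp T h g)) \<and>
     (\<forall>A B C f g h. f \<in> Hom T B C \<longrightarrow> g \<in> Hom T B C \<longrightarrow> h \<in> Hom T A B \<longrightarrow>
         Cmp T (Addm T f g) h = Addm T (Cmp T f h) (Cmp T g h))"

definition is_zero_obj :: "('o,'m) tcat \<Rightarrow> 'o \<Rightarrow> bool" where
  "is_zero_obj T Z \<longleftrightarrow> (\<forall>A. (\<exists>!f. f \<in> Hom T Z A) \<and> (\<exists>!f. f \<in> Hom T A Z))"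

definition biprod :: "('o,'m) tcat \<Rightarrow> 'o \<Rightarrow> 'o \<Rightarrow> 'o \<Rightarrow> 'm \<Rightarrow> 'm \<Rightarrow> 'm \<Rightarrow> 'm \<Rightarrow> bool" where
  "biprod T A B P p1 p2 i1 i2 \<longleftrightarrow>
     p1 \<in> Hom T P A \<and> p2 \<in> Hom T P B \<and> i1 \<in> Hom T A P \<and> i2 \<in> Hom T B P \<and>
     Cmp T p1 i1 = Idm T A \<and> Cmp T p2 i2 = Idm T B \<and>
     Cmp T p1 i2 = Zerom T B A \<and> Cmp T p2 i1 = Zerom T A B \<and>
     Addm T (Cmp T i1 p1) (Cmp T i2 p2) = Idm T P"

definition additive :: "('o,'m) tcat \<Rightarrow> bool" where
  "additive T \<longleftrightarrow> preadditive T \<and> (\<exists>Z. is_zero_obj T Z) \<and>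
     (\<forall>A B. \<exists>P p1 p2 i1 i2. biprod T A B P p1 p2 i1 i2)"

definition iso :: "('o,'m) tcat \<Rightarrow> 'm \<Rightarrow> bool" where
  "iso T f \<longleftrightarrow> f \<in> Arr T \<and> (\<exists>g \<in> Hom T (Cod T f) (Dom T f).
      Cmp T g f = Idm T (Dom T f) \<and> Cmp T f g = Idm T (Cod T f))"

definition shift_ok :: "('o,'m) tcat \<Rightarrow> bool" where
  "shift_ok T \<longleftrightarrow>
     (\<forall>A B f. f \<in> Hom T A B \<longrightarrow> ShM T f \<in> Hom T (Sh T A) (Sh T B)) \<and>
     (\<forall>A. ShM T (Idm T A) = Idm T (Sh T A)) \<and>
     (\<forall>A B C f g. f \<in> Hom T A B \<longrightarrow> g \<in> Hom T B C \<longrightarrow>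
         ShM T (Cmp T g f) = Cmp T (ShM T g) (ShM T f)) \<and>
     (\<forall>A B f g. f \<in> Hom T A B \<longrightarrow> g \<in> Hom T A B \<longrightarrow>
         ShM T (Addm T f g) = Addm T (ShM T f) (ShM T g)) \<and>
     (\<forall>A B. bij_betw (ShM T) (Hom T A B) (Hom T (Sh T A) (Sh T B))) \<and>
     (\<forall>B. \<exists>A f. f \<in> Hom T (Sh T A) B \<and> iso T f)"

definition is_tri :: "('o,'m) tcat \<Rightarrow> 'm \<Rightarrow> 'm \<Rightarrow> 'm \<Rightarrow> bool" where
  "is_tri T u v w \<longleftrightarrow> u \<in> Arr T \<and> v \<in> Arr T \<and> w \<in> Arr T \<and>
     Cod T u = Dom T v \<and> Cod T v = Dom T w \<and> Cod T w = Sh T (Dom T u)"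

definition tri_morph :: "('o,'m) tcat \<Rightarrow> 'm \<Rightarrow> 'm \<Rightarrow> 'm \<Rightarrow> 'm \<Rightarrow> 'm \<Rightarrow> 'm
     \<Rightarrow> 'm \<Rightarrow> 'm \<Rightarrow> 'm \<Rightarrow> bool" where
  "tri_morph T u v w u' v' w' a b c \<longleftrightarrow> is_tri T u v w \<and> is_tri T u' v' w' \<and>
     a \<in> Hom T (Dom T u) (Dom T u') \<and> b \<in> Hom T (Dom T v) (Dom T v') \<and>
     c \<in> Hom T (Dom T w) (Dom T w') \<and>
     Cmp T b u = Cmp T u' a \<and> Cmp T c v = Cmp T v' b \<and> Cmp T (ShM T a) w = Cmp T w' c"

definition triangulated :: "('o,'m) tcat \<Rightarrow> bool" where
  "triangulated T \<longleftrightarrow> additive T \<and> shift_ok T \<and>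
     \<comment> \<open>TR1\<close>
     (\<forall>u v w. (u,v,w) \<in> Tri T \<longrightarrow> is_tri T u v w) \<and>
     (\<forall>u v w u' v' w' a b c. (u,v,w) \<in> Tri T \<and> tri_morph T u v w u' v' w' a b c \<and>
         iso T a \<and> iso T b \<and> iso T c \<longrightarrow> (u',v',w') \<in> Tri T) \<and>
     (\<forall>A. \<exists>Z. is_zero_obj T Z \<and> (Idm T A, Zerom T A Z, Zerom T Z (Sh T A)) \<in> Tri T) \<and>
     (\<forall>u \<in> Arr T. \<exists>v w. (u,v,w) \<in> Tri T) \<and>
     \<comment> \<open>TR2\<close>
     (\<forall>u v w. is_tri T u v w \<longrightarrow>
         ((u,v,w) \<in> Tri T \<longleftrightarrow> (v, w, Negm T (ShM T u)) \<in> Tri T)) \<and>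
     \<comment> \<open>TR3\<close>
     (\<forall>u v w u' v' w' a b. (u,v,w) \<in> Tri T \<and> (u',v',w') \<in> Tri T \<and>
         a \<in> Hom T (Dom T u) (Dom T u') \<and> b \<in> Hom T (Cod T u) (Cod T u') \<and>
         Cmp T b u = Cmp T u' a \<longrightarrow> (\<exists>c. tri_morph T u v w u' v' w' a b c)) \<and>
     \<comment> \<open>TR4 (octahedral axiom)\<close>
     (\<forall>u1 j k u2 l i m n. (u1,j,k) \<in> Tri T \<and> (u2,l,i) \<in> Tri T \<and>
         Cod T u1 = Dom T u2 \<and> (Cmp T u2 u1, m, n) \<in> Tri T \<longrightarrow>
         (\<exists>f g. (f, g, Cmp T (ShM T j) i) \<in> Tri T \<and>
            Cmp T f j = Cmp T m u2 \<and> Cmp T n f = k \<and>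
            Cmp T g m = l \<and> Cmp T i g = Cmp T (ShM T u1) n))"

text \<open>Subcategories: full, additive, closed under isomorphisms (given by their object sets).\<close>
definition subcat :: "('o,'m) tcat \<Rightarrow> 'o set \<Rightarrow> bool" where
  "subcat T S \<longleftrightarrow> (\<forall>f. iso T f \<and> Dom T f \<in> S \<longrightarrow> Cod T f \<in> S) \<and>
     (\<exists>Z \<in> S. is_zero_obj T Z) \<and>
     (\<forall>A B P p1 p2 i1 i2. A \<in> S \<and> B \<in> S \<and> biprod T A B P p1 p2 i1 i2 \<longrightarrow> P \<in> S)"

definition tri_subcat :: "('o,'m) tcat \<Rightarrow> 'o set \<Rightarrow> bool" where
  "tri_subcat T N \<longleftrightarrow> subcat T N \<and> (\<forall>A. A \<in> N \<longleftrightarrow> Sh T A \<in> N) \<and>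
     (\<forall>u v w. (u,v,w) \<in> Tri T \<and> Dom T u \<in> N \<and> Cod T u \<in> N \<longrightarrow> Cod T v \<in> N)"

definition factors :: "('o,'m) tcat \<Rightarrow> 'o set \<Rightarrow> 'm \<Rightarrow> bool" where
  "factors T X f \<longleftrightarrow> (\<exists>W \<in> X. \<exists>g h. g \<in> Hom T (Dom T f) W \<and> h \<in> Hom T W (Cod T f) \<and>
      f = Cmp T h g)"

definition diffm :: "('o,'m) tcat \<Rightarrow> 'm \<Rightarrow> 'm \<Rightarrow> 'm" where
  "diffm T f g = Addm T f (Negm T g)"

text \<open>The class of s is an isomorphism in the factor category modulo [X].\<close>
definition q_iso :: "('o,'m) tcat \<Rightarrow> 'o set \<Rightarrow> 'm \<Rightarrow> bool" where
  "q_iso T X s \<longleftrightarrow> s \<in> Arr T \<and> (\<exists>g \<in> Hom T (Cod T s) (Dom T s).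
      factors T X (diffm T (Cmp T g s) (Idm T (Dom T s))) \<and>
      factors T X (diffm T (Cmp T s g) (Idm T (Cod T s))))"

definition monic_wrt :: "('o,'m) tcat \<Rightarrow> 'o set \<Rightarrow> 'm \<Rightarrow> bool" where
  "monic_wrt T Y f \<longleftrightarrow> f \<in> Arr T \<and>
     (\<forall>Y0 \<in> Y. \<forall>g \<in> Hom T (Dom T f) Y0. \<exists>h \<in> Hom T (Cod T f) Y0. Cmp T h f = g)"

definition epic_wrt :: "('o,'m) tcat \<Rightarrow> 'o set \<Rightarrow> 'm \<Rightarrow> bool" where
  "epic_wrt T Y f \<longleftrightarrow> f \<in> Arr T \<and>
     (\<forall>Y0 \<in> Y. \<forall>g \<in> Hom T Y0 (Cod T f). \<exists>h \<in> Hom T Y0 (Dom T f). Cmp T f h = g)"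

definition preenv :: "('o,'m) tcat \<Rightarrow> 'o set \<Rightarrow> 'm \<Rightarrow> bool" where
  "preenv T Y f \<longleftrightarrow> monic_wrt T Y f \<and> Cod T f \<in> Y"

definition precov :: "('o,'m) tcat \<Rightarrow> 'o set \<Rightarrow> 'm \<Rightarrow> bool" where
  "precov T Y f \<longleftrightarrow> epic_wrt T Y f \<and> Dom T f \<in> Y"

definition special_monic_closed :: "('o,'m) tcat \<Rightarrow> 'o set \<Rightarrow> 'o set \<Rightarrow> bool" where
  "special_monic_closed T X C \<longleftrightarrow> subcat T C \<and> X \<subseteq> C \<and>
     (\<forall>A \<in> C. \<exists>i p q. (i,p,q) \<in> Tri T \<and> Dom T i = A \<and> preenv T X i \<and> Cod T p \<in> C) \<and>
     (\<forall>i p q f. (i,p,q) \<in> Tri T \<and> Dom T i \<in> C \<and> Cod T p \<in> C \<and> preenv T X i \<and>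
         f \<in> Arr T \<and> Dom T f = Dom T i \<and> Cod T f \<in> C \<longrightarrow>
         (\<exists>P p1 p2 i1 i2 h v w. biprod T (Cod T i) (Cod T f) P p1 p2 i1 i2 \<and>
            h \<in> Hom T (Dom T i) P \<and> Cmp T p1 h = i \<and> Cmp T p2 h = f \<and>
            (h,v,w) \<in> Tri T \<and> Cod T v \<in> C))"

definition special_epic_closed :: "('o,'m) tcat \<Rightarrow> 'o set \<Rightarrow> 'o set \<Rightarrow> bool" where
  "special_epic_closed T X C \<longleftrightarrow> subcat T C \<and> X \<subseteq> C \<and>
     (\<forall>A \<in> C. \<exists>\<iota> \<pi> q. (\<iota>,\<pi>,q) \<in> Tri T \<and> Cod T \<pi> = A \<and> precov T X \<pi> \<and> Dom T \<iota> \<in> C) \<and>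
     (\<forall>\<iota> \<pi> q f. (\<iota>,\<pi>,q) \<in> Tri T \<and> Dom T \<iota> \<in> C \<and> Cod T \<pi> \<in> C \<and> precov T X \<pi> \<and>
         f \<in> Arr T \<and> Cod T f = Cod T \<pi> \<and> Dom T f \<in> C \<longrightarrow>
         (\<exists>P p1 p2 i1 i2 h a w. biprod T (Dom T \<pi>) (Dom T f) P p1 p2 i1 i2 \<and>
            h \<in> Hom T P (Cod T \<pi>) \<and> Cmp T h i1 = \<pi> \<and> Cmp T h i2 = f \<and>
            (a,h,w) \<in> Tri T \<and> Dom T a \<in> C))"

text \<open>Frobenius: the fixed triangles of (a) are taken to be some choice of such triangles;
  as a hypothesis this is expressed by existence for each object.\<close>
definition frob_monic :: "('o,'m) tcat \<Rightarrow> 'o set \<Rightarrow> 'o set \<Rightarrow> bool" where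
  "frob_monic T X C \<longleftrightarrow> special_monic_closed T X C \<and>
     (\<forall>A \<in> C. \<exists>u v w. (u,v,w) \<in> Tri T \<and> Cod T v = A \<and> Dom T u \<in> C \<and> preenv T X u) \<and>
     (\<forall>A \<in> C. \<exists>i p q. (i,p,q) \<in> Tri T \<and> Dom T i = A \<and> preenv T X i \<and> Cod T p \<in> C \<and>
         precov T X p)"

definition frob_epic :: "('o,'m) tcat \<Rightarrow> 'o set \<Rightarrow> 'o set \<Rightarrow> bool" where
  "frob_epic T X C \<longleftrightarrow> special_epic_closed T X C \<and>
     (\<forall>A \<in> C. \<exists>u v w. (u,v,w) \<in> Tri T \<and> Dom T u = A \<and> Cod T v \<in> C \<and> precov T X v) \<and>
     (\<forall>A \<in> C. \<exists>\<iota> \<pi> q. (\<iota>,\<pi>,q) \<in> Tri T \<and> Cod T \<pi> = A \<and> precov T X \<pi> \<and> Dom T \<iota> \<in> C \<and>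
         preenv T X \<iota>)"

text \<open>Perpendicular categories inside the factor category Amb/[X].\<close>
definition perpR :: "('o,'m) tcat \<Rightarrow> 'o set \<Rightarrow> 'o set \<Rightarrow> 'o set \<Rightarrow> 'o set" where
  "perpR T Amb X S = {W \<in> Amb. \<forall>S0 \<in> S. \<forall>f \<in> Hom T S0 W. factors T X f}"

definition perpL :: "('o,'m) tcat \<Rightarrow> 'o set \<Rightarrow> 'o set \<Rightarrow> 'o set \<Rightarrow> 'o set" where
  "perpL T Amb X S = {W \<in> Amb. \<forall>S0 \<in> S. \<forall>f \<in> Hom T W S0. factors T X f}"

text \<open>Localization triple of T. The triangle A[-1] -> W_A -> Q(A) -> A is rendered as a
  distinguished triangle X' -> W_A -> Q(A) -c-> X'[1] with an isomorphism theta : X'[1] -> A,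
  r_A = theta o c.\<close>
definition loc_triple :: "('o,'m) tcat \<Rightarrow> 'o set \<Rightarrow> 'o set \<Rightarrow> 'o set \<Rightarrow> bool" where
  "loc_triple T U X V \<longleftrightarrow> X \<subseteq> U \<inter> V \<and>
     (\<forall>A. \<exists>a b c \<theta>. (a,b,c) \<in> Tri T \<and> \<theta> \<in> Hom T (Sh T (Dom T a)) A \<and> iso T \<theta> \<and>
         precov T U (Cmp T \<theta> c) \<and> Cod T a \<in> perpR T UNIV X U \<and>
         (A \<in> V \<longrightarrow> Cod T b \<in> U \<inter> V \<and> Cod T a \<in> perpR T V X (U \<inter> V))) \<and>
     (\<forall>A. \<exists>j v w. (j,v,w) \<in> Tri T \<and> Dom T j = A \<and> preenv T V j \<and>
         Cod T v \<in> perpL T UNIV X V \<and>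
         (A \<in> U \<longrightarrow> Cod T j \<in> U \<inter> V \<and> Cod T v \<in> perpL T U X (U \<inter> V)))"

definition N_loc_triple :: "('o,'m) tcat \<Rightarrow> 'o set \<Rightarrow> 'o set \<Rightarrow> 'o set \<Rightarrow> 'o set \<Rightarrow> bool" where
  "N_loc_triple T U X V N \<longleftrightarrow> loc_triple T U X V \<and> X = U \<inter> V \<inter> N \<and>
     perpR T UNIV X U \<subseteq> N \<and> perpL T UNIV X V \<subseteq> N"

definition verdier :: "('o,'m) tcat \<Rightarrow> 'o set \<Rightarrow> 'o set \<Rightarrow> 'o set \<Rightarrow> 'o set \<Rightarrow> bool" where
  "verdier T U X V N \<longleftrightarrow> (\<forall>s v w. (s,v,w) \<in> Tri T \<and> Dom T s \<in> U \<inter> V \<and>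
     Cod T s \<in> U \<inter> V \<and> Cod T v \<in> N \<longrightarrow> q_iso T X s)"

end

theory Submission
  imports Defs
begin

text \<open>
  Let \<open>s : A \<rightarrow> B\<close> be a morphism of \<open>C = U \<inter> V\<close> whose cone lies in \<open>N\<close>; of the
  localization triple only \<open>X = C \<inter> N\<close> is needed. In the monic case, the closure property applied to
  \<open>s\<close> and a Frobenius triangle \<open>A \<rightarrow> X\<^sub>A \<rightarrow> U\<^sub>A \<rightarrow> A[1]\<close> gives a triangle
  \<open>A \<rightarrow> X\<^sub>A \<oplus> B \<rightarrow> M \<rightarrow> A[1]\<close> with \<open>M \<in> C\<close>. The projection \<open>X\<^sub>A \<oplus> B \<rightarrow> B\<close>
  has its cone in \<open>N\<close>, so by the octahedral axiom \<open>M \<in> N\<close>, i.e. \<open>M \<in> X\<close>. As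
  \<open>X\<^sub>A \<rightarrow> U\<^sub>A\<close> is an \<open>X\<close>-precover, the map \<open>M \<rightarrow> A[1]\<close> vanishes and the triangle splits.
  Restricting its retraction \<open>X\<^sub>A \<oplus> B \<rightarrow> A\<close> to \<open>B\<close> gives an inverse of \<open>s\<close> up to maps
  factoring through \<open>X\<^sub>A\<close> and \<open>M\<close>. The epic case is dual.
\<close>

lemma frob_monic_triangle:
  assumes "frob_monic T X C" "A \<in> C"
  obtains i p q where "(i,p,q) \<in> Tri T" "Dom T i = A" "preenv T X i" "Cod T p \<in> C" "precov T X p"
  using assms unfolding frob_monic_def by blast

lemma frob_epic_triangle:
  assumes "frob_epic T X C" "A \<in> C"
  obtains i p q where "(i,p,q) \<in> Tri T" "Cod T p = A" "precov T X p" "Dom T i \<in> C" "preenv T X i"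
  using assms unfolding frob_epic_def by blast

lemma special_monic_closed_triangle:
  assumes "special_monic_closed T X C" "(i,p,q) \<in> Tri T" "Dom T i \<in> C" "Cod T p \<in> C" "preenv T X i"
    "f \<in> Arr T" "Dom T f = Dom T i" "Cod T f \<in> C"
  obtains P p1 p2 i1 i2 h v w where "biprod T (Cod T i) (Cod T f) P p1 p2 i1 i2"
    "h \<in> Hom T (Dom T i) P" "Cmp T p1 h = i" "Cmp T p2 h = f" "(h,v,w) \<in> Tri T" "Cod T v \<in> C"
  using assms unfolding special_monic_closed_def by blast

lemma special_epic_closed_triangle:
  assumes "special_epic_closed T X C" "(i,p,q) \<in> Tri T" "Dom T i \<in> C" "Cod T p \<in> C" "precov T X p"
    "f \<in> Arr T" "Cod T f = Cod T p" "Dom T f \<in> C"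
  obtains P p1 p2 i1 i2 h a w where "biprod T (Dom T p) (Dom T f) P p1 p2 i1 i2"
    "h \<in> Hom T P (Cod T p)" "Cmp T h i1 = p" "Cmp T h i2 = f" "(a,h,w) \<in> Tri T" "Dom T a \<in> C"
  using assms unfolding special_epic_closed_def by blast

locale triangulated_category =
  fixes T :: "('o,'m) tcat"
  assumes triangulated: "triangulated T"
begin

subsection \<open>Preadditive structure\<close>

lemma additive: "additive T" and shift_ok: "shift_ok T"
  using triangulated unfolding triangulated_def by blast+

lemma preadditive: "preadditive T"
  using additive unfolding additive_def by blast

lemma category: "category T"
  using preadditive unfolding preadditive_def by blast

lemma arr_in_hom: "f \<in> Arr T \<Longrightarrow> f \<in> Hom T (Dom T f) (Cod T f)"
  and hom_arr: "f \<in> Hom T A B \<Longrightarrow> f \<in> Arr T"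
  and hom_dom: "f \<in> Hom T A B \<Longrightarrow> Dom T f = A"
  and hom_cod: "f \<in> Hom T A B \<Longrightarrow> Cod T f = B"
  by (simp_all add: Hom_def)

lemma hom_idm [simp]: "Idm T A \<in> Hom T A A"
  and hom_cmp: "f \<in> Hom T A B \<Longrightarrow> g \<in> Hom T B C \<Longrightarrow> Cmp T g f \<in> Hom T A C"
  and cmp_assoc: "f \<in> Hom T A B \<Longrightarrow> g \<in> Hom T B C \<Longrightarrow> h \<in> Hom T C D \<Longrightarrow>
    Cmp T h (Cmp T g f) = Cmp T (Cmp T h g) f"
  and cmp_idm_right: "f \<in> Hom T A B \<Longrightarrow> Cmp T f (Idm T A) = f"
  and cmp_idm_left: "f \<in> Hom T A B \<Longrightarrow> Cmp T (Idm T B) f = f"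
  using category unfolding category_def by blast+

lemma hom_zero [simp]: "Zerom T A B \<in> Hom T A B"
  and hom_add: "f \<in> Hom T A B \<Longrightarrow> g \<in> Hom T A B \<Longrightarrow> Addm T f g \<in> Hom T A B"
  and hom_neg: "f \<in> Hom T A B \<Longrightarrow> Negm T f \<in> Hom T A B"
  and add_assoc: "f \<in> Hom T A B \<Longrightarrow> g \<in> Hom T A B \<Longrightarrow> h \<in> Hom T A B \<Longrightarrow>
    Addm T (Addm T f g) h = Addm T f (Addm T g h)"
  and add_commute: "f \<in> Hom T A B \<Longrightarrow> g \<in> Hom T A B \<Longrightarrow> Addm T f g = Addm T g f"
  and add_zero_right: "f \<in> Hom T A B \<Longrightarrow> Addm T f (Zerom T A B) = f"
  and add_neg_right: "f \<in> Hom T A B \<Longrightarrow> Addm T f (Negm T f) = Zerom T A B"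
  using preadditive[unfolded preadditive_def, THEN conjunct2, THEN conjunct1, THEN spec[of _ A],
      THEN spec[of _ B]]
  by blast+

lemma cmp_distrib_left: "f \<in> Hom T A B \<Longrightarrow> g \<in> Hom T A B \<Longrightarrow> h \<in> Hom T B C \<Longrightarrow>
    Cmp T h (Addm T f g) = Addm T (Cmp T h f) (Cmp T h g)"
  and cmp_distrib_right: "f \<in> Hom T B C \<Longrightarrow> g \<in> Hom T B C \<Longrightarrow> h \<in> Hom T A B \<Longrightarrow>
    Cmp T (Addm T f g) h = Addm T (Cmp T f h) (Cmp T g h)"
  using preadditive[unfolded preadditive_def, THEN conjunct2, THEN conjunct2] by blast+

lemma hom_diffm: "f \<in> Hom T A B \<Longrightarrow> g \<in> Hom T A B \<Longrightarrow> diffm T f g \<in> Hom T A B"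
  unfolding diffm_def by (intro hom_add hom_neg)

lemma add_zero_left: "f \<in> Hom T A B \<Longrightarrow> Addm T (Zerom T A B) f = f"
  using add_commute[OF hom_zero, of f A B] add_zero_right[of f A B] by simp

lemma add_left_cancel:
  assumes f: "f \<in> Hom T A B" and x: "x \<in> Hom T A B" and y: "y \<in> Hom T A B"
    and eq: "Addm T f x = Addm T f y"
  shows "x = y"
proof -
  have nf: "Negm T f \<in> Hom T A B" using hom_neg[OF f] .
  have cancel: "Addm T (Negm T f) (Addm T f z) = z" if z: "z \<in> Hom T A B" for z
  proof -
    have "Addm T (Negm T f) (Addm T f z) = Addm T (Addm T f (Negm T f)) z"
      using add_assoc[OF nf f z] add_commute[OF nf f] by simp
    also have "\<dots> = z" using add_neg_right[OF f] add_zero_left[OF z] by simp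
    finally show ?thesis .
  qed
  show ?thesis using cancel[OF x] cancel[OF y] eq by metis
qed

lemma neg_unique:
  assumes x: "x \<in> Hom T A B" and y: "y \<in> Hom T A B" and xy: "Addm T x y = Zerom T A B"
  shows "y = Negm T x"
  using add_left_cancel[OF x y hom_neg[OF x]] xy add_neg_right[OF x] by simp

lemma neg_neg: "x \<in> Hom T A B \<Longrightarrow> Negm T (Negm T x) = x"
  using neg_unique[of "Negm T x" A B x] hom_neg[of x A B] add_commute[of x A B "Negm T x"]
    add_neg_right[of x A B] by simp

lemma neg_zero: "Negm T (Zerom T A B) = Zerom T A B"
  using neg_unique[OF hom_zero hom_zero] add_zero_right[OF hom_zero] by simp

lemma add_idem_zero: "x \<in> Hom T A B \<Longrightarrow> Addm T x x = x \<Longrightarrow> x = Zerom T A B"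
  using add_left_cancel[of x A B x "Zerom T A B"] add_zero_right by simp

lemma cmp_zero_right:
  assumes f: "f \<in> Hom T A B" shows "Cmp T f (Zerom T C A) = Zerom T C B"
proof (rule add_idem_zero)
  show "Cmp T f (Zerom T C A) \<in> Hom T C B" using hom_cmp[OF hom_zero f] .
  show "Addm T (Cmp T f (Zerom T C A)) (Cmp T f (Zerom T C A)) = Cmp T f (Zerom T C A)"
    using cmp_distrib_left[OF hom_zero hom_zero f] add_zero_right[OF hom_zero] by simp
qed

lemma cmp_zero_left:
  assumes f: "f \<in> Hom T A B" shows "Cmp T (Zerom T B C) f = Zerom T A C"
proof (rule add_idem_zero)
  show "Cmp T (Zerom T B C) f \<in> Hom T A C" using hom_cmp[OF f hom_zero] .
  show "Addm T (Cmp T (Zerom T B C) f) (Cmp T (Zerom T B C) f) = Cmp T (Zerom T B C) f"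
    using cmp_distrib_right[OF hom_zero hom_zero f] add_zero_right[OF hom_zero] by simp
qed

lemma cmp_neg_right:
  assumes f: "f \<in> Hom T A B" and g: "g \<in> Hom T B C"
  shows "Cmp T g (Negm T f) = Negm T (Cmp T g f)"
  using neg_unique[OF hom_cmp[OF f g] hom_cmp[OF hom_neg[OF f] g]]
    cmp_distrib_left[OF f hom_neg[OF f] g] add_neg_right[OF f] cmp_zero_right[OF g] by simp

lemma cmp_neg_left:
  assumes f: "f \<in> Hom T A B" and g: "g \<in> Hom T B C"
  shows "Cmp T (Negm T g) f = Negm T (Cmp T g f)"
  using neg_unique[OF hom_cmp[OF f g] hom_cmp[OF f hom_neg[OF g]]]
    cmp_distrib_right[OF g hom_neg[OF g] f] add_neg_right[OF g] cmp_zero_left[OF f] by simp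

lemma cmp_diffm_left:
  "f \<in> Hom T A B \<Longrightarrow> g \<in> Hom T A B \<Longrightarrow> h \<in> Hom T B C \<Longrightarrow>
    Cmp T h (diffm T f g) = diffm T (Cmp T h f) (Cmp T h g)"
  unfolding diffm_def using cmp_distrib_left[OF _ hom_neg] cmp_neg_right by simp

lemma cmp_diffm_right:
  "f \<in> Hom T B C \<Longrightarrow> g \<in> Hom T B C \<Longrightarrow> h \<in> Hom T A B \<Longrightarrow>
    Cmp T (diffm T f g) h = diffm T (Cmp T f h) (Cmp T g h)"
  unfolding diffm_def using cmp_distrib_right[OF _ hom_neg] cmp_neg_left by simp

lemma diffm_self: "f \<in> Hom T A B \<Longrightarrow> diffm T f f = Zerom T A B"
  unfolding diffm_def by (rule add_neg_right)

lemma diffm_zero: "f \<in> Hom T A B \<Longrightarrow> diffm T f (Zerom T A B) = f"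
  unfolding diffm_def by (simp add: neg_zero add_zero_right)

lemma add_diffm_cancel:
  assumes f: "f \<in> Hom T A B" and g: "g \<in> Hom T A B"
  shows "Addm T f (diffm T g f) = g"
proof -
  have "Addm T f (diffm T g f) = Addm T (Addm T g f) (Negm T f)"
    unfolding diffm_def using add_assoc[OF f g hom_neg[OF f]] add_commute[OF f g] by simp
  also have "\<dots> = g"
    using add_assoc[OF g f hom_neg[OF f]] add_neg_right[OF f] add_zero_right[OF g] by simp
  finally show ?thesis .
qed

lemma diffm_eq_neg:
  assumes f: "f \<in> Hom T A B" and g: "g \<in> Hom T A B" and \<phi>: "\<phi> \<in> Hom T A B"
    and sum: "Addm T \<phi> f = g"
  shows "diffm T f g = Negm T \<phi>"
proof (rule neg_unique[OF \<phi> hom_diffm[OF f g]])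
  show "Addm T \<phi> (diffm T f g) = Zerom T A B"
    unfolding diffm_def using add_assoc[OF \<phi> f hom_neg[OF g]] sum add_neg_right[OF g] by simp
qed

lemma cmp_regroup:
  assumes "y \<in> Hom T A B" "f2 \<in> Hom T B C" "f1 \<in> Hom T C D" "x \<in> Hom T D E"
  shows "Cmp T x (Cmp T (Cmp T f1 f2) y) = Cmp T (Cmp T x f1) (Cmp T f2 y)"
  using cmp_assoc[OF assms(1) hom_cmp[OF assms(2,3)] assms(4)] cmp_assoc[OF assms(2-4)]
    cmp_assoc[OF assms(1,2) hom_cmp[OF assms(3,4)]] by simp

lemma cmp_add_sandwich:
  "y \<in> Hom T A B \<Longrightarrow> f \<in> Hom T B C \<Longrightarrow> g \<in> Hom T B C \<Longrightarrow> x \<in> Hom T C D \<Longrightarrow>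
    Cmp T x (Cmp T (Addm T f g) y) = Addm T (Cmp T x (Cmp T f y)) (Cmp T x (Cmp T g y))"
  using cmp_distrib_right[of f B C g y A] cmp_distrib_left[of "Cmp T f y" A C "Cmp T g y" x D] hom_cmp
  by simp

subsection \<open>Zero objects and the shift\<close>

lemma zero_obj_out: "is_zero_obj T Z \<Longrightarrow> f \<in> Hom T Z A \<Longrightarrow> f = Zerom T Z A"
  and zero_obj_in: "is_zero_obj T Z \<Longrightarrow> f \<in> Hom T A Z \<Longrightarrow> f = Zerom T A Z"
  unfolding is_zero_obj_def using hom_zero by blast+

lemma iso_idm: "iso T (Idm T A)"
  unfolding iso_def using hom_idm hom_dom hom_cod cmp_idm_left[OF hom_idm] hom_arr by metis

lemma zero_obj_iso:
  assumes "is_zero_obj T Z" "is_zero_obj T Z'" shows "iso T (Zerom T Z Z')"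
proof -
  have "Cmp T (Zerom T Z' Z) (Zerom T Z Z') = Idm T Z"
    using zero_obj_out[OF assms(1)] hom_cmp[OF hom_zero hom_zero] hom_idm by metis
  moreover have "Cmp T (Zerom T Z Z') (Zerom T Z' Z) = Idm T Z'"
    using zero_obj_out[OF assms(2)] hom_cmp[OF hom_zero hom_zero] hom_idm by metis
  ultimately show ?thesis
    unfolding iso_def using hom_dom[OF hom_zero] hom_cod[OF hom_zero] hom_arr[OF hom_zero] hom_zero
    by metis
qed

lemma zero_obj_iso_closed:
  assumes Z: "is_zero_obj T Z" and \<phi>: "\<phi> \<in> Hom T Z' Z" "iso T \<phi>"
  shows "is_zero_obj T Z'"
proof -
  obtain \<psi> where \<psi>: "\<psi> \<in> Hom T Z Z'" "Cmp T \<psi> \<phi> = Idm T Z'" "Cmp T \<phi> \<psi> = Idm T Z"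
    using \<phi> hom_dom[OF \<phi>(1)] hom_cod[OF \<phi>(1)] unfolding iso_def by auto
  have "f = Zerom T Z' A" if f: "f \<in> Hom T Z' A" for f A
  proof -
    have "f = Cmp T (Cmp T f \<psi>) \<phi>"
      using cmp_idm_right[OF f] \<psi>(2) cmp_assoc[OF \<phi>(1) \<psi>(1) f] by simp
    also have "\<dots> = Zerom T Z' A"
      using zero_obj_out[OF Z hom_cmp[OF \<psi>(1) f]] cmp_zero_left[OF \<phi>(1)] by simp
    finally show ?thesis .
  qed
  moreover have "f = Zerom T A Z'" if f: "f \<in> Hom T A Z'" for f A
  proof -
    have "f = Cmp T \<psi> (Cmp T \<phi> f)"
      using cmp_idm_left[OF f] \<psi>(2) cmp_assoc[OF f \<phi>(1) \<psi>(1)] by simp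
    also have "\<dots> = Zerom T A Z'"
      using zero_obj_in[OF Z hom_cmp[OF f \<phi>(1)]] cmp_zero_right[OF \<psi>(1)] by simp
    finally show ?thesis .
  qed
  ultimately show ?thesis unfolding is_zero_obj_def using hom_zero by blast
qed

lemma shm_hom: "f \<in> Hom T A B \<Longrightarrow> ShM T f \<in> Hom T (Sh T A) (Sh T B)"
  and shm_idm: "ShM T (Idm T A) = Idm T (Sh T A)"
  and shm_cmp: "f \<in> Hom T A B \<Longrightarrow> g \<in> Hom T B C \<Longrightarrow>
    ShM T (Cmp T g f) = Cmp T (ShM T g) (ShM T f)"
  and shm_add: "f \<in> Hom T A B \<Longrightarrow> g \<in> Hom T A B \<Longrightarrow>
    ShM T (Addm T f g) = Addm T (ShM T f) (ShM T g)"
  and shm_bij: "bij_betw (ShM T) (Hom T A B) (Hom T (Sh T A) (Sh T B))"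
  and shift_ess_surj: "\<exists>A f. f \<in> Hom T (Sh T A) B \<and> iso T f"
  using shift_ok unfolding shift_ok_def by blast+

lemma shm_inj: "f \<in> Hom T A B \<Longrightarrow> g \<in> Hom T A B \<Longrightarrow> ShM T f = ShM T g \<Longrightarrow> f = g"
  using shm_bij[of A B] unfolding bij_betw_def inj_on_def by blast

lemma shm_surj:
  assumes "g \<in> Hom T (Sh T A) (Sh T B)" obtains f where "f \<in> Hom T A B" "ShM T f = g"
proof -
  have "g \<in> ShM T ` Hom T A B" using assms shm_bij[of A B] unfolding bij_betw_def by simp
  then show ?thesis using that by blast
qed

lemma shm_zero: "ShM T (Zerom T A B) = Zerom T (Sh T A) (Sh T B)"
proof (rule add_idem_zero[OF shm_hom[OF hom_zero]])
  have "Addm T (Zerom T A B) (Zerom T A B) = Zerom T A B" by (rule add_zero_right[OF hom_zero])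
  then show "Addm T (ShM T (Zerom T A B)) (ShM T (Zerom T A B)) = ShM T (Zerom T A B)"
    using shm_add[OF hom_zero hom_zero, of A B] by metis
qed

lemma shm_neg: assumes f: "f \<in> Hom T A B" shows "ShM T (Negm T f) = Negm T (ShM T f)"
proof (rule neg_unique[OF shm_hom[OF f] shm_hom[OF hom_neg[OF f]]])
  show "Addm T (ShM T f) (ShM T (Negm T f)) = Zerom T (Sh T A) (Sh T B)"
    using shm_add[OF f hom_neg[OF f]] add_neg_right[OF f] shm_zero by simp
qed

lemma zero_obj_shift_reflect:
  assumes Z: "is_zero_obj T (Sh T W)" shows "is_zero_obj T W"
proof -
  have "f = Zerom T W A" if f: "f \<in> Hom T W A" for f A
    using shm_inj[OF f hom_zero] zero_obj_out[OF Z shm_hom[OF f]] shm_zero by simp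
  moreover have "f = Zerom T A W" if f: "f \<in> Hom T A W" for f A
    using shm_inj[OF f hom_zero] zero_obj_in[OF Z shm_hom[OF f]] shm_zero by simp
  ultimately show ?thesis unfolding is_zero_obj_def using hom_zero by blast
qed

subsection \<open>Distinguished triangles\<close>

lemmas triangle_axioms = triangulated[unfolded triangulated_def, THEN conjunct2, THEN conjunct2]

lemma tri_is_tri: "(u,v,w) \<in> Tri T \<Longrightarrow> is_tri T u v w"
  using triangle_axioms[THEN conjunct1] by blast

lemma tri_iso_closed: "(u,v,w) \<in> Tri T \<Longrightarrow> tri_morph T u v w u' v' w' a b c \<Longrightarrow>
    iso T a \<Longrightarrow> iso T b \<Longrightarrow> iso T c \<Longrightarrow> (u',v',w') \<in> Tri T"
  using triangle_axioms[THEN conjunct2, THEN conjunct1] by blast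

lemma tri_idm: "\<exists>Z. is_zero_obj T Z \<and> (Idm T A, Zerom T A Z, Zerom T Z (Sh T A)) \<in> Tri T"
  using triangle_axioms[THEN conjunct2, THEN conjunct2, THEN conjunct1] by blast

lemma tri_exists: "u \<in> Arr T \<Longrightarrow> \<exists>v w. (u,v,w) \<in> Tri T"
  using triangle_axioms[THEN conjunct2, THEN conjunct2, THEN conjunct2, THEN conjunct1] by blast

lemma tri_rotate_iff:
  "is_tri T u v w \<Longrightarrow> (u,v,w) \<in> Tri T \<longleftrightarrow> (v, w, Negm T (ShM T u)) \<in> Tri T"
  using triangle_axioms[THEN conjunct2, THEN conjunct2, THEN conjunct2, THEN conjunct2, THEN conjunct1]
  by blast

lemma tri_morph_exists: "(u,v,w) \<in> Tri T \<Longrightarrow> (u',v',w') \<in> Tri T \<Longrightarrow>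
    a \<in> Hom T (Dom T u) (Dom T u') \<Longrightarrow> b \<in> Hom T (Cod T u) (Cod T u') \<Longrightarrow>
    Cmp T b u = Cmp T u' a \<Longrightarrow> \<exists>c. tri_morph T u v w u' v' w' a b c"
  using triangle_axioms[THEN conjunct2, THEN conjunct2, THEN conjunct2, THEN conjunct2,
      THEN conjunct2, THEN conjunct1]
  by blast

lemma octahedral: "(u1,j,k) \<in> Tri T \<Longrightarrow> (u2,l,i) \<in> Tri T \<Longrightarrow>
    Cod T u1 = Dom T u2 \<Longrightarrow> (Cmp T u2 u1, m, n) \<in> Tri T \<Longrightarrow>
    \<exists>f g. (f, g, Cmp T (ShM T j) i) \<in> Tri T \<and> Cmp T f j = Cmp T m u2 \<and> Cmp T n f = k \<and>
      Cmp T g m = l \<and> Cmp T i g = Cmp T (ShM T u1) n"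
  using triangle_axioms[THEN conjunct2, THEN conjunct2, THEN conjunct2, THEN conjunct2,
      THEN conjunct2, THEN conjunct2]
  by blast

lemma tri_rotate: "(u,v,w) \<in> Tri T \<Longrightarrow> (v, w, Negm T (ShM T u)) \<in> Tri T"
  using tri_rotate_iff tri_is_tri by blast

lemma tri_homs:
  assumes "(u,v,w) \<in> Tri T"
  shows "u \<in> Hom T (Dom T u) (Cod T u)" "v \<in> Hom T (Cod T u) (Cod T v)"
    "w \<in> Hom T (Cod T v) (Sh T (Dom T u))"
  using tri_is_tri[OF assms] unfolding is_tri_def Hom_def by auto

lemma tri_comp_zero:
  assumes t: "(u,v,w) \<in> Tri T" shows "Cmp T v u = Zerom T (Dom T u) (Cod T v)"
proof -
  let ?A = "Dom T u"
  obtain Z where Z: "is_zero_obj T Z" "(Idm T ?A, Zerom T ?A Z, Zerom T Z (Sh T ?A)) \<in> Tri T"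
    using tri_idm by blast
  have I: "Dom T (Idm T ?A) = ?A" "Cod T (Idm T ?A) = ?A"
    using hom_dom[OF hom_idm] hom_cod[OF hom_idm] by auto
  obtain c where "tri_morph T (Idm T ?A) (Zerom T ?A Z) (Zerom T Z (Sh T ?A)) u v w (Idm T ?A) u c"
    using tri_morph_exists[OF Z(2) t _ _ refl] I tri_homs(1)[OF t] by fastforce
  then have c: "c \<in> Hom T Z (Cod T v)" and sq: "Cmp T c (Zerom T ?A Z) = Cmp T v u"
    unfolding tri_morph_def using hom_dom[OF hom_zero] hom_dom[OF tri_homs(3)[OF t]] by auto
  show ?thesis using sq cmp_zero_right[OF c] by simp
qed

lemma tri_comp_zero_shift:
  assumes t: "(u,v,w) \<in> Tri T"
  shows "Cmp T (ShM T u) w = Zerom T (Cod T v) (Sh T (Cod T u))"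
proof -
  have uh: "ShM T u \<in> Hom T (Sh T (Dom T u)) (Sh T (Cod T u))" using shm_hom[OF tri_homs(1)[OF t]] .
  have wh: "w \<in> Hom T (Cod T v) (Sh T (Dom T u))" using tri_homs(3)[OF t] .
  have "Negm T (Cmp T (ShM T u) w) = Zerom T (Cod T v) (Sh T (Cod T u))"
    using tri_comp_zero[OF tri_rotate[OF tri_rotate[OF t]]] cmp_neg_left[OF wh uh]
      hom_dom[OF wh] hom_cod[OF hom_neg[OF uh]] by simp
  then show ?thesis using neg_neg[OF hom_cmp[OF wh uh]] neg_zero by metis
qed

lemma tri_lift:
  assumes t: "(u,v,w) \<in> Tri T" and f: "f \<in> Hom T Y (Cod T u)"
    and vf: "Cmp T v f = Zerom T Y (Cod T v)"
  obtains a where "a \<in> Hom T Y (Dom T u)" "f = Cmp T u a"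
proof -
  obtain Z where Z: "is_zero_obj T Z" "(Idm T Y, Zerom T Y Z, Zerom T Z (Sh T Y)) \<in> Tri T"
    using tri_idm by blast
  have uh: "u \<in> Hom T (Dom T u) (Cod T u)" using tri_homs(1)[OF t] .
  have su: "ShM T u \<in> Hom T (Sh T (Dom T u)) (Sh T (Cod T u))" using shm_hom[OF uh] .
  have sf: "ShM T f \<in> Hom T (Sh T Y) (Sh T (Cod T u))" using shm_hom[OF f] .
  have sid: "ShM T (Idm T Y) \<in> Hom T (Sh T Y) (Sh T Y)" using shm_hom[OF hom_idm] .
  obtain c where "tri_morph T (Zerom T Y Z) (Zerom T Z (Sh T Y)) (Negm T (ShM T (Idm T Y)))
      v w (Negm T (ShM T u)) f (Zerom T Z (Cod T v)) c"
    using tri_morph_exists[OF tri_rotate[OF Z(2)] tri_rotate[OF t], of f "Zerom T Z (Cod T v)"]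
      f hom_dom[OF hom_zero] hom_cod[OF hom_zero] hom_dom[OF tri_homs(2)[OF t]]
      cmp_zero_right[OF hom_zero] vf by fastforce
  then have c: "c \<in> Hom T (Sh T Y) (Sh T (Dom T u))"
    and sq: "Cmp T (ShM T f) (Negm T (ShM T (Idm T Y))) = Cmp T (Negm T (ShM T u)) c"
    unfolding tri_morph_def using hom_dom[OF hom_neg[OF sid]] hom_dom[OF hom_neg[OF su]] by auto
  have "Negm T (ShM T f) = Negm T (Cmp T (ShM T u) c)"
    using sq cmp_neg_right[OF sid sf] shm_idm cmp_idm_right[OF sf] cmp_neg_left[OF c su] by simp
  then have "ShM T f = Cmp T (ShM T u) c"
    using neg_neg[OF sf] neg_neg[OF hom_cmp[OF c su]] by metis
  moreover obtain a where a: "a \<in> Hom T Y (Dom T u)" "ShM T a = c" using shm_surj[OF c] by blast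
  ultimately have "f = Cmp T u a"
    using shm_inj[OF f hom_cmp[OF a(1) uh]] shm_cmp[OF a(1) uh] by simp
  with a(1) show ?thesis by (rule that)
qed

text \<open>TR1 only provides \<open>(id, 0, 0)\<close>; its rotation \<open>(0, id, 0)\<close> starts at a desuspension
  of a zero object, which exists because the shift is essentially surjective.\<close>
lemma tri_zero_idm:
  obtains W x y where "is_zero_obj T W" "x \<in> Hom T W Y" "(x, Idm T Y, y) \<in> Tri T"
proof -
  obtain Z where Z: "is_zero_obj T Z" "(Idm T Y, Zerom T Y Z, Zerom T Z (Sh T Y)) \<in> Tri T"
    using tri_idm by blast
  obtain W \<phi> where \<phi>: "\<phi> \<in> Hom T (Sh T W) Z" "iso T \<phi>" using shift_ess_surj by blast
  have SW: "is_zero_obj T (Sh T W)" using zero_obj_iso_closed[OF Z(1) \<phi>] .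
  have I: "Dom T (Idm T Y) = Y" "Cod T (Idm T Y) = Y" using hom_dom[OF hom_idm] hom_cod[OF hom_idm] by auto
  have "(Idm T Y, Zerom T Y (Sh T W), Zerom T (Sh T W) (Sh T Y)) \<in> Tri T"
  proof (rule tri_iso_closed[OF Z(2) _ iso_idm iso_idm zero_obj_iso[OF Z(1) SW]])
    show "tri_morph T (Idm T Y) (Zerom T Y Z) (Zerom T Z (Sh T Y)) (Idm T Y) (Zerom T Y (Sh T W))
      (Zerom T (Sh T W) (Sh T Y)) (Idm T Y) (Idm T Y) (Zerom T Z (Sh T W))"
      unfolding tri_morph_def is_tri_def
      using tri_is_tri[OF Z(2)] I hom_arr[OF hom_idm] hom_arr[OF hom_zero] hom_dom[OF hom_zero]
        hom_cod[OF hom_zero] cmp_zero_right[OF hom_zero] cmp_zero_right[OF shm_hom[OF hom_idm]]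
        cmp_idm_right[OF hom_zero] hom_zero hom_idm
      by (simp add: is_tri_def)
  qed
  then have "(Zerom T W Y, Idm T Y, Zerom T Y (Sh T W)) \<in> Tri T"
    using tri_rotate_iff[of "Zerom T W Y" "Idm T Y" "Zerom T Y (Sh T W)"] shm_zero neg_zero
      I hom_arr[OF hom_idm] hom_arr[OF hom_zero] hom_dom[OF hom_zero] hom_cod[OF hom_zero]
    unfolding is_tri_def by simp
  with zero_obj_shift_reflect[OF SW] hom_zero show ?thesis by (rule that)
qed

lemma tri_extend:
  assumes t: "(u,v,w) \<in> Tri T" and g: "g \<in> Hom T (Cod T u) Y"
    and gu: "Cmp T g u = Zerom T (Dom T u) Y"
  obtains c where "c \<in> Hom T (Cod T v) Y" "Cmp T c v = g"
proof -
  obtain W x y where W: "is_zero_obj T W" "x \<in> Hom T W Y" "(x, Idm T Y, y) \<in> Tri T"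
    by (rule tri_zero_idm)
  have "Cmp T g u = Cmp T x (Zerom T (Dom T u) W)"
    using gu zero_obj_out[OF W(1,2)] cmp_zero_left[OF hom_zero] by simp
  then obtain c where "tri_morph T u v w x (Idm T Y) y (Zerom T (Dom T u) W) g c"
    using tri_morph_exists[OF t W(3)] g hom_dom[OF W(2)] hom_cod[OF W(2)] hom_zero by fastforce
  then have "c \<in> Hom T (Cod T v) Y" "Cmp T c v = g"
    unfolding tri_morph_def
    using hom_dom[OF tri_homs(3)[OF t]] hom_dom[OF tri_homs(3)[OF W(3)]] hom_cod[OF hom_idm]
      cmp_idm_left[OF g] by auto
  then show ?thesis by (rule that)
qed

lemma tri_third_zero_of_retraction:
  assumes t: "(u,v,w) \<in> Tri T" and r: "r \<in> Hom T (Cod T u) (Dom T u)"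
    and ru: "Cmp T r u = Idm T (Dom T u)"
  shows "w = Zerom T (Cod T v) (Sh T (Dom T u))"
proof -
  have uh: "u \<in> Hom T (Dom T u) (Cod T u)" and wh: "w \<in> Hom T (Cod T v) (Sh T (Dom T u))"
    using tri_homs[OF t] by auto
  have su: "ShM T u \<in> Hom T (Sh T (Dom T u)) (Sh T (Cod T u))" using shm_hom[OF uh] .
  have sr: "ShM T r \<in> Hom T (Sh T (Cod T u)) (Sh T (Dom T u))" using shm_hom[OF r] .
  have "w = Cmp T (ShM T (Cmp T r u)) w" using ru shm_idm cmp_idm_left[OF wh] by simp
  also have "\<dots> = Cmp T (ShM T r) (Cmp T (ShM T u) w)"
    using shm_cmp[OF uh r] cmp_assoc[OF wh su sr] by simp
  also have "\<dots> = Zerom T (Cod T v) (Sh T (Dom T u))"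
    using tri_comp_zero_shift[OF t] cmp_zero_right[OF sr] by simp
  finally show ?thesis .
qed

lemma tri_retraction_of_third_zero:
  assumes t: "(u,v,w) \<in> Tri T" and w0: "w = Zerom T (Cod T v) (Sh T (Dom T u))"
  obtains r where "r \<in> Hom T (Cod T u) (Dom T u)" "Cmp T r u = Idm T (Dom T u)"
proof -
  let ?A = "Dom T u" and ?B = "Cod T u"
  have uh: "u \<in> Hom T ?A ?B" using tri_homs(1)[OF t] .
  have su: "ShM T u \<in> Hom T (Sh T ?A) (Sh T ?B)" using shm_hom[OF uh] .
  have wh: "w \<in> Hom T (Cod T v) (Sh T ?A)" using tri_homs(3)[OF t] .
  have "Cmp T (Idm T (Sh T ?A)) w = Zerom T (Dom T w) (Sh T ?A)"
    using w0 cmp_zero_right[OF hom_idm] hom_dom[OF wh] by simp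
  then obtain c where c: "c \<in> Hom T (Sh T ?B) (Sh T ?A)" "Cmp T c (Negm T (ShM T u)) = Idm T (Sh T ?A)"
    using tri_extend[OF tri_rotate[OF tri_rotate[OF t]], of "Idm T (Sh T ?A)"]
      hom_cod[OF wh] hom_cod[OF hom_neg[OF su]] by (metis hom_idm)
  obtain r0 where r0: "r0 \<in> Hom T ?B ?A" "ShM T r0 = c" using shm_surj[OF c(1)] by blast
  have "ShM T (Negm T (Cmp T r0 u)) = ShM T (Idm T ?A)"
    using c(2) r0(2) shm_neg[OF hom_cmp[OF uh r0(1)]] shm_cmp[OF uh r0(1)] cmp_neg_right[OF su c(1)]
      shm_idm by simp
  then have "Cmp T (Negm T r0) u = Idm T ?A"
    using shm_inj[OF hom_neg[OF hom_cmp[OF uh r0(1)]] hom_idm] cmp_neg_left[OF uh r0(1)] by simp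
  with hom_neg[OF r0(1)] show ?thesis by (rule that)
qed

lemma tri_split_of_third_zero:
  assumes t: "(u,v,w) \<in> Tri T" and w0: "w = Zerom T (Cod T v) (Sh T (Dom T u))"
  obtains r s where "r \<in> Hom T (Cod T u) (Dom T u)" "s \<in> Hom T (Cod T v) (Cod T u)"
    "Cmp T r u = Idm T (Dom T u)" "Cmp T v s = Idm T (Cod T v)"
    "Addm T (Cmp T u r) (Cmp T s v) = Idm T (Cod T u)"
proof -
  let ?A = "Dom T u" and ?B = "Cod T u" and ?C = "Cod T v"
  have uh: "u \<in> Hom T ?A ?B" and vh: "v \<in> Hom T ?B ?C" and wh: "w \<in> Hom T ?C (Sh T ?A)"
    using tri_homs[OF t] by auto
  obtain r where r: "r \<in> Hom T ?B ?A" "Cmp T r u = Idm T ?A"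
    by (rule tri_retraction_of_third_zero[OF t w0])
  have "Cmp T w (Idm T ?C) = Zerom T ?C (Cod T w)"
    using w0 cmp_zero_left[OF hom_idm] hom_cod[OF wh] by simp
  then obtain s0 where s0: "s0 \<in> Hom T ?C ?B" "Idm T ?C = Cmp T v s0"
    using tri_lift[OF tri_rotate[OF t], of "Idm T ?C" ?C] hom_cod[OF vh] hom_dom[OF vh] by auto
  define e where "e = diffm T (Idm T ?B) (Cmp T u r)"
  have ur: "Cmp T u r \<in> Hom T ?B ?B" using hom_cmp[OF r(1) uh] .
  have eh: "e \<in> Hom T ?B ?B" unfolding e_def using hom_diffm[OF hom_idm ur] .
  have "Cmp T e u = diffm T u (Cmp T u (Cmp T r u))"
    unfolding e_def using cmp_diffm_right[OF hom_idm ur uh] cmp_idm_left[OF uh]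
      cmp_assoc[OF uh r(1) uh] by simp
  then have "Cmp T e u = Zerom T ?A ?B" using r(2) cmp_idm_right[OF uh] diffm_self[OF uh] by simp
  then obtain s where s: "s \<in> Hom T ?C ?B" "Cmp T s v = e" using tri_extend[OF t eh] by blast
  have "Cmp T v e = diffm T v (Cmp T (Cmp T v u) r)"
    unfolding e_def using cmp_diffm_left[OF hom_idm ur vh] cmp_idm_right[OF vh]
      cmp_assoc[OF r(1) uh vh] by simp
  then have ve: "Cmp T v e = v"
    using tri_comp_zero[OF t] cmp_zero_left[OF r(1)] diffm_zero[OF vh] by simp
  have "Cmp T v s = Cmp T (Cmp T v s) (Cmp T v s0)" using s0(2) cmp_idm_right[OF hom_cmp[OF s(1) vh]] by simp
  also have "\<dots> = Cmp T (Cmp T v e) s0" using cmp_regroup[OF s0(1) vh s(1) vh] s(2) cmp_assoc[OF s0(1) eh vh] by simp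
  also have "\<dots> = Idm T ?C" using ve s0(2) by simp
  finally have "Cmp T v s = Idm T ?C" .
  moreover have "Addm T (Cmp T u r) (Cmp T s v) = Idm T ?B"
    using s(2) add_diffm_cancel[OF ur hom_idm] unfolding e_def by simp
  ultimately show ?thesis using that r s(1) by blast
qed

lemma biprod_sandwich:
  assumes bp: "biprod T Y B P p1 p2 i1 i2" and x: "x \<in> Hom T P C" and y: "y \<in> Hom T D P"
  shows "Addm T (Cmp T (Cmp T x i1) (Cmp T p1 y)) (Cmp T (Cmp T x i2) (Cmp T p2 y)) = Cmp T x y"
proof -
  have b: "p1 \<in> Hom T P Y" "p2 \<in> Hom T P B" "i1 \<in> Hom T Y P" "i2 \<in> Hom T B P"
    "Addm T (Cmp T i1 p1) (Cmp T i2 p2) = Idm T P"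
    using bp unfolding biprod_def by simp_all
  have "Cmp T x y = Cmp T x (Cmp T (Addm T (Cmp T i1 p1) (Cmp T i2 p2)) y)"
    using b(5) cmp_idm_left[OF y] by simp
  also have "\<dots> = Addm T (Cmp T x (Cmp T (Cmp T i1 p1) y)) (Cmp T x (Cmp T (Cmp T i2 p2) y))"
    using cmp_add_sandwich[OF y hom_cmp[OF b(1,3)] hom_cmp[OF b(2,4)] x] .
  finally show ?thesis using cmp_regroup[OF y b(1,3) x] cmp_regroup[OF y b(2,4) x] by simp
qed

lemma biprod_inj_cone_iso:
  assumes bp: "biprod T Y B P p1 p2 i1 i2" and t: "(i2, j, k) \<in> Tri T"
  shows "Cmp T j i1 \<in> Hom T Y (Cod T j)" "iso T (Cmp T j i1)"
proof -
  let ?F = "Cod T j"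
  have b: "p1 \<in> Hom T P Y" "p2 \<in> Hom T P B" "i1 \<in> Hom T Y P" "i2 \<in> Hom T B P"
    "Cmp T p1 i1 = Idm T Y" "Cmp T p2 i2 = Idm T B" "Cmp T p1 i2 = Zerom T B Y"
    using bp unfolding biprod_def by simp_all
  have i2: "Dom T i2 = B" "Cod T i2 = P" using hom_dom[OF b(4)] hom_cod[OF b(4)] by auto
  have jh: "j \<in> Hom T P ?F" using tri_homs(2)[OF t] i2 by simp
  have "k = Zerom T ?F (Sh T B)" using tri_third_zero_of_retraction[OF t] b(2,6) i2 by simp
  then obtain r s where r: "r \<in> Hom T P B" and s: "s \<in> Hom T ?F P"
    and js: "Cmp T j s = Idm T ?F" and split: "Addm T (Cmp T i2 r) (Cmp T s j) = Idm T P"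
    using tri_split_of_third_zero[OF t] i2 by metis
  show ji1: "Cmp T j i1 \<in> Hom T Y ?F" using hom_cmp[OF b(3) jh] .
  have p1s: "Cmp T p1 s \<in> Hom T ?F Y" using hom_cmp[OF s b(1)] .
  have "Idm T Y = Cmp T p1 (Cmp T (Addm T (Cmp T i2 r) (Cmp T s j)) i1)"
    using split b(5) cmp_idm_left[OF b(3)] by simp
  also have "\<dots> = Addm T (Cmp T (Cmp T p1 i2) (Cmp T r i1)) (Cmp T (Cmp T p1 s) (Cmp T j i1))"
    using cmp_add_sandwich[OF b(3) hom_cmp[OF r b(4)] hom_cmp[OF jh s] b(1)]
      cmp_regroup[OF b(3) r b(4) b(1)] cmp_regroup[OF b(3) jh s b(1)] by simp
  also have "\<dots> = Cmp T (Cmp T p1 s) (Cmp T j i1)"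
    using b(7) cmp_zero_left[OF hom_cmp[OF b(3) r]] add_zero_left[OF hom_cmp[OF ji1 p1s]] by simp
  finally have left: "Cmp T (Cmp T p1 s) (Cmp T j i1) = Idm T Y" by simp
  have "Cmp T (Cmp T j i1) (Cmp T p1 s) = Idm T ?F"
    using biprod_sandwich[OF bp jh s] js tri_comp_zero[OF t] i2 cmp_zero_left[OF hom_cmp[OF s b(2)]]
      add_zero_right[OF hom_cmp[OF p1s ji1]] by simp
  then show "iso T (Cmp T j i1)"
    unfolding iso_def using ji1 p1s left hom_arr hom_dom hom_cod by metis
qed

subsection \<open>Triangulated subcategories\<close>

lemma tri_subcat_iso: "tri_subcat T N \<Longrightarrow> iso T f \<Longrightarrow> Dom T f \<in> N \<Longrightarrow> Cod T f \<in> N"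
  and tri_subcat_shift: "tri_subcat T N \<Longrightarrow> A \<in> N \<longleftrightarrow> Sh T A \<in> N"
  and tri_subcat_cone: "tri_subcat T N \<Longrightarrow> (u,v,w) \<in> Tri T \<Longrightarrow> Dom T u \<in> N \<Longrightarrow> Cod T u \<in> N \<Longrightarrow>
    Cod T v \<in> N"
  unfolding tri_subcat_def subcat_def by blast+

lemma tri_subcat_zero_obj: assumes N: "tri_subcat T N" and Z: "is_zero_obj T Z" shows "Z \<in> N"
proof -
  obtain Z0 where Z0: "Z0 \<in> N" "is_zero_obj T Z0" using N unfolding tri_subcat_def subcat_def by blast
  show ?thesis using tri_subcat_iso[OF N zero_obj_iso[OF Z0(2) Z]] Z0(1)
    hom_dom[OF hom_zero] hom_cod[OF hom_zero] by metis
qed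

lemma octahedral_cones:
  assumes t1: "(u1,j,k) \<in> Tri T" and t2: "(u2,l,i) \<in> Tri T" and c: "Cod T u1 = Dom T u2"
    and t3: "(Cmp T u2 u1, m, n) \<in> Tri T"
  obtains f g z where "(f,g,z) \<in> Tri T" "Dom T f = Cod T j" "Cod T f = Cod T m" "Cod T g = Cod T l"
proof -
  obtain f g where fg: "(f, g, Cmp T (ShM T j) i) \<in> Tri T" "Cmp T n f = k"
      "Cmp T i g = Cmp T (ShM T u1) n"
    using octahedral[OF t1 t2 c t3] by blast
  have u1: "u1 \<in> Hom T (Dom T u1) (Cod T u1)" and kh: "k \<in> Hom T (Cod T j) (Sh T (Dom T u1))"
    and jh: "j \<in> Hom T (Cod T u1) (Cod T j)" using tri_homs[OF t1] by auto
  have ih: "i \<in> Hom T (Cod T l) (Sh T (Cod T u1))" using tri_homs(3)[OF t2] c by simp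
  have "Dom T (Cmp T u2 u1) = Dom T u1"
    using hom_dom[OF hom_cmp[OF u1 tri_homs(1)[OF t2, folded c]]] .
  then have nh: "n \<in> Hom T (Cod T m) (Sh T (Dom T u1))" using tri_homs(3)[OF t3] by simp
  have ft: "is_tri T f g (Cmp T (ShM T j) i)" using tri_is_tri[OF fg(1)] .
  have cg: "Cod T g = Cod T l"
    using ft hom_dom[OF hom_cmp[OF ih shm_hom[OF jh]]] unfolding is_tri_def by simp
  then have gh: "g \<in> Hom T (Dom T g) (Cod T l)" using ft arr_in_hom unfolding is_tri_def by metis
  have dg: "Dom T g = Cod T m"
    using fg(3) hom_dom[OF hom_cmp[OF gh ih]] hom_dom[OF hom_cmp[OF nh shm_hom[OF u1]]] by metis
  then have fh: "f \<in> Hom T (Dom T f) (Cod T m)" using ft arr_in_hom unfolding is_tri_def by metis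
  have "Dom T f = Cod T j" using fg(2) hom_dom[OF hom_cmp[OF fh nh]] hom_dom[OF kh] by metis
  with fg(1) show ?thesis using that hom_cod[OF fh] cg by blast
qed

lemma tri_subcat_cone_first_factor:
  assumes N: "tri_subcat T N" and "(u1,j,k) \<in> Tri T" "(u2,l,i) \<in> Tri T" "Cod T u1 = Dom T u2"
    "(Cmp T u2 u1, m, n) \<in> Tri T" and "Cod T l \<in> N" "Cod T m \<in> N"
  shows "Cod T j \<in> N"
proof -
  obtain f g z where fgz: "(f,g,z) \<in> Tri T" "Dom T f = Cod T j" "Cod T f = Cod T m" "Cod T g = Cod T l"
    using octahedral_cones assms(2-5) by blast
  have "Sh T (Dom T f) \<in> N"
    using tri_subcat_cone[OF N tri_rotate[OF fgz(1)]] tri_is_tri[OF fgz(1)] fgz(3,4) assms(6,7)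
    unfolding is_tri_def by simp
  then show ?thesis using tri_subcat_shift[OF N] fgz(2) by simp
qed

lemma tri_subcat_cone_second_factor:
  assumes N: "tri_subcat T N" and "(u1,j,k) \<in> Tri T" "(u2,l,i) \<in> Tri T" "Cod T u1 = Dom T u2"
    "(Cmp T u2 u1, m, n) \<in> Tri T" and "Cod T j \<in> N" "Cod T m \<in> N"
  shows "Cod T l \<in> N"
proof -
  obtain f g z where "(f,g,z) \<in> Tri T" "Dom T f = Cod T j" "Cod T f = Cod T m" "Cod T g = Cod T l"
    using octahedral_cones assms(2-5) by blast
  then show ?thesis using tri_subcat_cone[OF N] assms(6,7) by metis
qed

lemma tri_subcat_biprod_inj_cone:
  assumes N: "tri_subcat T N" and bp: "biprod T Y B P p1 p2 i1 i2" and "Y \<in> N"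
    and t: "(i2, j, k) \<in> Tri T"
  shows "Cod T j \<in> N"
  using tri_subcat_iso[OF N biprod_inj_cone_iso(2)[OF bp t]] assms(3)
    hom_dom[OF biprod_inj_cone_iso(1)[OF bp t]] hom_cod[OF biprod_inj_cone_iso(1)[OF bp t]] by simp

lemma tri_subcat_biprod_proj_cone:
  assumes N: "tri_subcat T N" and bp: "biprod T Y B P p1 p2 i1 i2" and "Y \<in> N"
    and t: "(p2, l, i) \<in> Tri T"
  shows "Cod T l \<in> N"
proof -
  have b: "p2 \<in> Hom T P B" "i2 \<in> Hom T B P" "Cmp T p2 i2 = Idm T B"
    using bp unfolding biprod_def by simp_all
  obtain j k where jk: "(i2, j, k) \<in> Tri T" using tri_exists[OF hom_arr[OF b(2)]] by blast
  obtain Z where Z: "is_zero_obj T Z" "(Idm T B, Zerom T B Z, Zerom T Z (Sh T B)) \<in> Tri T"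
    using tri_idm by blast
  show ?thesis
  proof (rule tri_subcat_cone_second_factor[OF N jk t])
    show "Cod T i2 = Dom T p2" using hom_cod[OF b(2)] hom_dom[OF b(1)] by simp
    show "(Cmp T p2 i2, Zerom T B Z, Zerom T Z (Sh T B)) \<in> Tri T" using Z(2) b(3) by simp
    show "Cod T j \<in> N" using tri_subcat_biprod_inj_cone[OF N bp assms(3) jk] .
    show "Cod T (Zerom T B Z) \<in> N" using tri_subcat_zero_obj[OF N Z(1)] hom_cod[OF hom_zero] by simp
  qed
qed

subsection \<open>The Verdier condition\<close>

lemma tri_precov_shift_kernel_zero:
  assumes t: "(i,p,q) \<in> Tri T" and p: "precov T X p" and M: "M \<in> X"
    and \<phi>: "\<phi> \<in> Hom T M (Sh T (Dom T i))"
    and i\<phi>: "Cmp T (ShM T i) \<phi> = Zerom T M (Sh T (Cod T i))"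
  shows "\<phi> = Zerom T M (Sh T (Dom T i))"
proof -
  have ph: "p \<in> Hom T (Cod T i) (Cod T p)" and qh: "q \<in> Hom T (Cod T p) (Sh T (Dom T i))"
    using tri_homs[OF t] by auto
  have si: "ShM T i \<in> Hom T (Sh T (Dom T i)) (Sh T (Cod T i))" using shm_hom[OF tri_homs(1)[OF t]] .
  have "Cmp T (Negm T (ShM T i)) \<phi> = Zerom T M (Cod T (Negm T (ShM T i)))"
    using cmp_neg_left[OF \<phi> si] i\<phi> neg_zero hom_cod[OF hom_neg[OF si]] by simp
  then obtain a where a: "a \<in> Hom T M (Cod T p)" "\<phi> = Cmp T q a"
    using tri_lift[OF tri_rotate[OF tri_rotate[OF t]], of \<phi> M] \<phi> hom_cod[OF qh] hom_dom[OF qh]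
    by metis
  obtain b where b: "b \<in> Hom T M (Cod T i)" "Cmp T p b = a"
    using p M a(1) hom_dom[OF ph] unfolding precov_def epic_wrt_def by metis
  have "\<phi> = Cmp T (Cmp T q p) b" using a(2) b(2) cmp_assoc[OF b(1) ph qh] by simp
  then show ?thesis
    using tri_comp_zero[OF tri_rotate[OF t]] hom_dom[OF ph] hom_cod[OF qh] cmp_zero_left[OF b(1)] by simp
qed

lemma tri_preenv_shift_cokernel_zero:
  assumes t: "(i,p,q) \<in> Tri T" and i: "preenv T X i" and M: "M \<in> X"
    and \<phi>: "\<phi> \<in> Hom T (Cod T p) (Sh T M)" and \<phi>p: "Cmp T \<phi> p = Zerom T (Dom T p) (Sh T M)"
  shows "\<phi> = Zerom T (Cod T p) (Sh T M)"
proof -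
  have ih: "i \<in> Hom T (Dom T i) (Cod T i)" and qh: "q \<in> Hom T (Cod T p) (Sh T (Dom T i))"
    using tri_homs[OF t] by auto
  obtain c where c: "c \<in> Hom T (Sh T (Dom T i)) (Sh T M)" "Cmp T c q = \<phi>"
    using tri_extend[OF tri_rotate[OF t], of \<phi>] \<phi> \<phi>p hom_cod[OF qh] by metis
  obtain c' where c': "c' \<in> Hom T (Dom T i) M" "ShM T c' = c" using shm_surj[OF c(1)] by blast
  obtain d where d: "d \<in> Hom T (Cod T i) M" "Cmp T d i = c'"
    using i M c'(1) unfolding preenv_def monic_wrt_def by metis
  have sd: "ShM T d \<in> Hom T (Sh T (Cod T i)) (Sh T M)" using shm_hom[OF d(1)] .
  have "\<phi> = Cmp T (ShM T d) (Cmp T (ShM T i) q)"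
    using c(2) c'(2) d(2) shm_cmp[OF ih d(1)] cmp_assoc[OF qh shm_hom[OF ih] sd] by simp
  then show ?thesis using tri_comp_zero_shift[OF t] cmp_zero_right[OF sd] by simp
qed

lemma factors_cmp: "g \<in> Hom T A W \<Longrightarrow> h \<in> Hom T W B \<Longrightarrow> W \<in> X \<Longrightarrow> factors T X (Cmp T h g)"
  unfolding factors_def using hom_dom[OF hom_cmp] hom_cod[OF hom_cmp] by metis

lemma factors_neg: assumes "factors T X f" shows "factors T X (Negm T f)"
proof -
  obtain W g h where W: "W \<in> X" and g: "g \<in> Hom T (Dom T f) W" and h: "h \<in> Hom T W (Cod T f)"
    and f: "f = Cmp T h g"
    using assms unfolding factors_def by blast
  have "Negm T f = Cmp T (Negm T h) g" using f cmp_neg_left[OF g h] by simp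
  then show ?thesis using factors_cmp[OF g hom_neg[OF h] W] by simp
qed

lemma q_isoI:
  assumes s: "s \<in> Hom T A B" and g: "g \<in> Hom T B A"
    and \<phi>: "\<phi> \<in> Hom T A A" "factors T X \<phi>" "Addm T \<phi> (Cmp T g s) = Idm T A"
    and \<psi>: "\<psi> \<in> Hom T B B" "factors T X \<psi>" "Addm T \<psi> (Cmp T s g) = Idm T B"
  shows "q_iso T X s"
proof -
  have "diffm T (Cmp T g s) (Idm T A) = Negm T \<phi>"
    using diffm_eq_neg[OF hom_cmp[OF s g] hom_idm \<phi>(1) \<phi>(3)] .
  moreover have "diffm T (Cmp T s g) (Idm T B) = Negm T \<psi>"
    using diffm_eq_neg[OF hom_cmp[OF g s] hom_idm \<psi>(1) \<psi>(3)] .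
  ultimately show ?thesis
    unfolding q_iso_def using factors_neg[OF \<phi>(2)] factors_neg[OF \<psi>(2)] s g hom_arr hom_dom hom_cod
    by metis
qed

lemma q_iso_biprod_proj_of_split:
  assumes bp: "biprod T Y B P p1 p2 i1 i2" and Y: "Y \<in> X" and M: "M \<in> X"
    and h: "h \<in> Hom T A P" and v: "v \<in> Hom T P M" and r: "r \<in> Hom T P A" and e: "e \<in> Hom T M P"
    and rh: "Cmp T r h = Idm T A" and split: "Addm T (Cmp T h r) (Cmp T e v) = Idm T P"
  shows "q_iso T X (Cmp T p2 h)"
proof -
  have b: "p1 \<in> Hom T P Y" "p2 \<in> Hom T P B" "i1 \<in> Hom T Y P" "i2 \<in> Hom T B P"
    "Cmp T p2 i2 = Idm T B"
    using bp unfolding biprod_def by simp_all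
  have "Idm T B = Cmp T p2 (Cmp T (Addm T (Cmp T h r) (Cmp T e v)) i2)"
    using split b(5) cmp_idm_left[OF b(4)] by simp
  also have "\<dots> = Addm T (Cmp T (Cmp T p2 h) (Cmp T r i2)) (Cmp T (Cmp T p2 e) (Cmp T v i2))"
    using cmp_add_sandwich[OF b(4) hom_cmp[OF r h] hom_cmp[OF v e] b(2)]
      cmp_regroup[OF b(4) r h b(2)] cmp_regroup[OF b(4) v e b(2)] by simp
  finally have "Addm T (Cmp T (Cmp T p2 e) (Cmp T v i2)) (Cmp T (Cmp T p2 h) (Cmp T r i2)) = Idm T B"
    using add_commute hom_cmp[OF hom_cmp[OF b(4) r] hom_cmp[OF h b(2)]]
      hom_cmp[OF hom_cmp[OF b(4) v] hom_cmp[OF e b(2)]] by metis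
  moreover have "Addm T (Cmp T (Cmp T r i1) (Cmp T p1 h)) (Cmp T (Cmp T r i2) (Cmp T p2 h)) = Idm T A"
    using biprod_sandwich[OF bp r h] rh by simp
  ultimately show ?thesis
    using q_isoI[OF hom_cmp[OF h b(2)] hom_cmp[OF b(4) r]]
      hom_cmp[OF hom_cmp[OF h b(1)] hom_cmp[OF b(3) r]] factors_cmp[OF hom_cmp[OF h b(1)] hom_cmp[OF b(3) r] Y]
      hom_cmp[OF hom_cmp[OF b(4) v] hom_cmp[OF e b(2)]] factors_cmp[OF hom_cmp[OF b(4) v] hom_cmp[OF e b(2)] M]
    by blast
qed

lemma q_iso_biprod_inj_of_split:
  assumes bp: "biprod T Y A P p1 p2 i1 i2" and Y: "Y \<in> X" and M: "M \<in> X"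
    and h: "h \<in> Hom T P B" and a: "a \<in> Hom T M P" and r: "r \<in> Hom T P M" and s: "s \<in> Hom T B P"
    and hs: "Cmp T h s = Idm T B" and split: "Addm T (Cmp T a r) (Cmp T s h) = Idm T P"
  shows "q_iso T X (Cmp T h i2)"
proof -
  have b: "p1 \<in> Hom T P Y" "p2 \<in> Hom T P A" "i1 \<in> Hom T Y P" "i2 \<in> Hom T A P"
    "Cmp T p2 i2 = Idm T A"
    using bp unfolding biprod_def by simp_all
  have "Idm T A = Cmp T p2 (Cmp T (Addm T (Cmp T a r) (Cmp T s h)) i2)"
    using split b(5) cmp_idm_left[OF b(4)] by simp
  also have "\<dots> = Addm T (Cmp T (Cmp T p2 a) (Cmp T r i2)) (Cmp T (Cmp T p2 s) (Cmp T h i2))"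
    using cmp_add_sandwich[OF b(4) hom_cmp[OF r a] hom_cmp[OF h s] b(2)]
      cmp_regroup[OF b(4) r a b(2)] cmp_regroup[OF b(4) h s b(2)] by simp
  finally have "Addm T (Cmp T (Cmp T p2 a) (Cmp T r i2)) (Cmp T (Cmp T p2 s) (Cmp T h i2)) = Idm T A"
    by simp
  moreover have "Addm T (Cmp T (Cmp T h i1) (Cmp T p1 s)) (Cmp T (Cmp T h i2) (Cmp T p2 s)) = Idm T B"
    using biprod_sandwich[OF bp h s] hs by simp
  ultimately show ?thesis
    using q_isoI[OF hom_cmp[OF b(4) h] hom_cmp[OF s b(2)]]
      hom_cmp[OF hom_cmp[OF b(4) r] hom_cmp[OF a b(2)]] factors_cmp[OF hom_cmp[OF b(4) r] hom_cmp[OF a b(2)] M]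
      hom_cmp[OF hom_cmp[OF s b(1)] hom_cmp[OF b(3) h]] factors_cmp[OF hom_cmp[OF s b(1)] hom_cmp[OF b(3) h] Y]
    by blast
qed

lemma q_iso_of_frob_monic:
  assumes N: "tri_subcat T N" and X: "X = C \<inter> N" and fm: "frob_monic T X C"
    and t: "(s,v,w) \<in> Tri T" and A: "Dom T s \<in> C" and B: "Cod T s \<in> C" and vN: "Cod T v \<in> N"
  shows "q_iso T X s"
proof -
  let ?A = "Dom T s"
  obtain i p q where ipq: "(i,p,q) \<in> Tri T" "Dom T i = ?A" "preenv T X i" "Cod T p \<in> C"
      "precov T X p"
    using frob_monic_triangle[OF fm A] by blast
  obtain P p1 p2 i1 i2 h v' w' where bp: "biprod T (Cod T i) (Cod T s) P p1 p2 i1 i2"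
    and h: "h \<in> Hom T ?A P" "Cmp T p1 h = i" "Cmp T p2 h = s"
    and th: "(h,v',w') \<in> Tri T" and MC: "Cod T v' \<in> C"
    using special_monic_closed_triangle[OF _ ipq(1) _ ipq(4,3) hom_arr[OF tri_homs(1)[OF t]]] fm A B ipq(2)
    unfolding frob_monic_def by metis
  have Y: "Cod T i \<in> X" using ipq(3) unfolding preenv_def by blast
  have p: "p1 \<in> Hom T P (Cod T i)" "p2 \<in> Hom T P (Cod T s)" using bp unfolding biprod_def by auto
  have hP: "Dom T h = ?A" "Cod T h = P" using hom_dom[OF h(1)] hom_cod[OF h(1)] by auto
  obtain l i0 where li: "(p2, l, i0) \<in> Tri T" using tri_exists[OF hom_arr[OF p(2)]] by blast
  have "Cod T v' \<in> N"
  proof (rule tri_subcat_cone_first_factor[OF N th li])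
    show "Cod T h = Dom T p2" using hP hom_dom[OF p(2)] by simp
    show "(Cmp T p2 h, v, w) \<in> Tri T" using t h(3) by simp
    show "Cod T l \<in> N" using tri_subcat_biprod_proj_cone[OF N bp _ li] Y X by blast
  qed (rule vN)
  then have M: "Cod T v' \<in> X" using MC X by blast
  have w': "w' \<in> Hom T (Cod T v') (Sh T ?A)" using tri_homs(3)[OF th] hP by simp
  have "Cmp T (ShM T i) w' = Cmp T (ShM T p1) (Cmp T (ShM T h) w')"
    using h(2) shm_cmp[OF h(1) p(1)] cmp_assoc[OF w' shm_hom[OF h(1)] shm_hom[OF p(1)]] by simp
  then have "w' = Zerom T (Cod T v') (Sh T ?A)"
    using tri_precov_shift_kernel_zero[OF ipq(1,5) M, of w'] w' ipq(2)
      tri_comp_zero_shift[OF th] hP cmp_zero_right[OF shm_hom[OF p(1)]] by simp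
  then obtain r e where "r \<in> Hom T P ?A" "e \<in> Hom T (Cod T v') P" "Cmp T r h = Idm T ?A"
      "Addm T (Cmp T h r) (Cmp T e v') = Idm T P"
    using tri_split_of_third_zero[OF th] hP by metis
  then show ?thesis
    using q_iso_biprod_proj_of_split[OF bp Y M h(1) tri_homs(2)[OF th, unfolded hP]] h(3) by blast
qed

lemma q_iso_of_frob_epic:
  assumes N: "tri_subcat T N" and X: "X = C \<inter> N" and fe: "frob_epic T X C"
    and t: "(s,v,w) \<in> Tri T" and A: "Dom T s \<in> C" and B: "Cod T s \<in> C" and vN: "Cod T v \<in> N"
  shows "q_iso T X s"
proof -
  let ?B = "Cod T s"
  obtain i p q where ipq: "(i,p,q) \<in> Tri T" "Cod T p = ?B" "precov T X p" "Dom T i \<in> C"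
      "preenv T X i"
    using frob_epic_triangle[OF fe B] by blast
  obtain P p1 p2 i1 i2 h a w' where bp: "biprod T (Dom T p) (Dom T s) P p1 p2 i1 i2"
    and h: "h \<in> Hom T P ?B" "Cmp T h i1 = p" "Cmp T h i2 = s"
    and th: "(a,h,w') \<in> Tri T" and MC: "Dom T a \<in> C"
    using special_epic_closed_triangle[OF _ ipq(1,4) _ ipq(3) hom_arr[OF tri_homs(1)[OF t]]] fe A B ipq(2)
    unfolding frob_epic_def by metis
  let ?M = "Dom T a"
  have Y: "Dom T p \<in> X" using ipq(3) unfolding precov_def by blast
  have i: "i1 \<in> Hom T (Dom T p) P" "i2 \<in> Hom T (Dom T s) P" using bp unfolding biprod_def by auto
  have hP: "Dom T h = P" "Cod T h = ?B" using hom_dom[OF h(1)] hom_cod[OF h(1)] by auto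
  obtain j k where jk: "(i2, j, k) \<in> Tri T" using tri_exists[OF hom_arr[OF i(2)]] by blast
  have "Cod T w' \<in> N"
  proof (rule tri_subcat_cone_second_factor[OF N jk tri_rotate[OF th]])
    show "Cod T i2 = Dom T h" using hP hom_cod[OF i(2)] by simp
    show "(Cmp T h i2, v, w) \<in> Tri T" using t h(3) by simp
    show "Cod T j \<in> N" using tri_subcat_biprod_inj_cone[OF N bp _ jk] Y X by blast
  qed (rule vN)
  then have "?M \<in> N" using tri_subcat_shift[OF N, of ?M] hom_cod[OF tri_homs(3)[OF th]] by simp
  then have M: "?M \<in> X" using MC X by blast
  have w': "w' \<in> Hom T ?B (Sh T ?M)" using tri_homs(3)[OF th] hP by simp
  have "Cmp T w' p = Cmp T (Cmp T w' h) i1"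
    using h(2) cmp_assoc[OF i(1) h(1) w'] by simp
  also have "\<dots> = Zerom T (Dom T p) (Sh T ?M)"
    using tri_comp_zero[OF tri_rotate[OF th]] hP hom_cod[OF w'] cmp_zero_left[OF i(1)] by simp
  finally have "w' = Zerom T ?B (Sh T ?M)"
    using tri_preenv_shift_cokernel_zero[OF ipq(1,5) M, of w'] w' ipq(2) by simp
  moreover have aP: "a \<in> Hom T ?M P" using tri_homs(1)[OF th] hom_dom[OF tri_homs(2)[OF th]] hP by simp
  ultimately obtain r s' where "r \<in> Hom T P ?M" "s' \<in> Hom T ?B P" "Cmp T h s' = Idm T ?B"
      "Addm T (Cmp T a r) (Cmp T s' h) = Idm T P"
    using tri_split_of_third_zero[OF th] hP hom_cod[OF aP] by metis
  then show ?thesis using q_iso_biprod_inj_of_split[OF bp Y M h(1) aP] h(3) by blast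
qed

end

theorem lemma4p2:
  fixes T :: "('o,'m) tcat" and U X V N :: "'o set"
  assumes "triangulated T"
    and "tri_subcat T N"
    and "subcat T U" and "subcat T V"
    and "N_loc_triple T U X V N"
  shows "(frob_monic T X (U \<inter> V) \<longrightarrow> verdier T U X V N) \<and>
         (frob_epic T X (U \<inter> V) \<longrightarrow> verdier T U X V N)"
proof -
  interpret triangulated_category T by (rule triangulated_category.intro) (rule assms(1))
  have X: "X = (U \<inter> V) \<inter> N" using assms(5) unfolding N_loc_triple_def by blast
  show ?thesis
    unfolding verdier_def
    using q_iso_of_frob_monic[OF assms(2) X] q_iso_of_frob_epic[OF assms(2) X] by blast
qed

end
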